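(* Let $N\geq 2$, $k\geq 1$ be integers, $s\in\left(-\frac{1}{N-1},1\right)$, and let $\Gamma(N,k)$ be the $N^k\times N^k$ matrix with rows and columns indexed by functions $\sigma,\tau:\{1,\dots,k\}\to\{1,\dots,N\}$ and entries $\Gamma(N,k)_{\sigma\tau}=s^{|\{t:\sigma(t)\neq\tau(t)\}|}$ (this is the Gram matrix of the states $|\psi_{\sigma(1)}\rangle\otimes\cdots\otimes|\psi_{\sigma(k)}\rangle$ where $|\psi_1\rangle,\dots,|\psi_N\rangle$ are unit vectors with pairwise inner products $s$). Let $I$ be the $N^k\times N^k$ identity matrix and $$P(N,k)=\begin{cases}(1-s)^k I, & s\in[0,1),\\ \left[1+(N-1)s\right]^k I, & s\in\left(-\frac{1}{N-1},0\right].\end{cases}$$ Then $\Gamma(N,k)-P(N,k)$ is positive semidefinite. *)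

theory Defs
  imports Complex_Main "HOL-Library.FuncSet"
begin

definition idx :: "nat \<Rightarrow> nat \<Rightarrow> (nat \<Rightarrow> nat) set" where
  "idx N k = ({1..k} \<rightarrow>\<^sub>E {1..N})"

definition Gamma :: "nat \<Rightarrow> nat \<Rightarrow> real \<Rightarrow> (nat \<Rightarrow> nat) \<Rightarrow> (nat \<Rightarrow> nat) \<Rightarrow> real" where
  "Gamma N k s \<sigma> \<tau> = s ^ card {t \<in> {1..k}. \<sigma> t \<noteq> \<tau> t}"

definition Pcoef :: "nat \<Rightarrow> nat \<Rightarrow> real \<Rightarrow> real" where
  "Pcoef N k s = (if 0 \<le> s then (1 - s) ^ k else (1 + (real N - 1) * s) ^ k)"

definition Pmat :: "nat \<Rightarrow> nat \<Rightarrow> real \<Rightarrow> (nat \<Rightarrow> nat) \<Rightarrow> (nat \<Rightarrow> nat) \<Rightarrow> real" where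
  "Pmat N k s \<sigma> \<tau> = (if \<sigma> = \<tau> then Pcoef N k s else 0)"

definition psd_on :: "'i set \<Rightarrow> ('i \<Rightarrow> 'i \<Rightarrow> real) \<Rightarrow> bool" where
  "psd_on S M \<longleftrightarrow> (\<forall>i\<in>S. \<forall>j\<in>S. M i j = M j i) \<and>
     (\<forall>x :: 'i \<Rightarrow> real. 0 \<le> (\<Sum>i\<in>S. \<Sum>j\<in>S. x i * M i j * x j))"

end

theory Submission
  imports Defs
begin

text \<open>Gamma(N,k) is the k-th tensor power of the N \<times> N matrix sJ + (1-s)I, whose least
  eigenvalue is c = Pcoef N 1 s (1 - s for s \<ge> 0, 1 + (N-1)s for s < 0), so its least
  eigenvalue is c^k.  Rather than diagonalising, we induct on the set T of coordinates:
  splitting off one coordinate t writes the quadratic form of the Hamming Gram matrix on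
  T \<union> {t} at y as tr((sJ + (1-s)I) G), where G is the Gram matrix, under the form on T,
  of the sections of y with t-th coordinate fixed.  G is positive semidefinite, and
  tr((sJ + (1-s)I) G) \<ge> c tr G for every positive semidefinite N \<times> N matrix G.\<close>

definition bilin_form ::
    "'i set \<Rightarrow> ('i \<Rightarrow> 'i \<Rightarrow> real) \<Rightarrow> ('i \<Rightarrow> real) \<Rightarrow> ('i \<Rightarrow> real) \<Rightarrow> real" where
  "bilin_form S M x y = (\<Sum>i\<in>S. \<Sum>j\<in>S. x i * M i j * y j)"

lemma psd_on_iff_bilin_form:
  "psd_on S M \<longleftrightarrow> (\<forall>i\<in>S. \<forall>j\<in>S. M i j = M j i) \<and> (\<forall>x. 0 \<le> bilin_form S M x x)"
  by (simp add: psd_on_def bilin_form_def)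

lemma bilin_form_diff_left:
  "bilin_form S M (\<lambda>i. x i - x' i) y = bilin_form S M x y - bilin_form S M x' y"
  by (simp add: bilin_form_def left_diff_distrib sum_subtractf)

lemma bilin_form_diff_right:
  "bilin_form S M x (\<lambda>j. y j - y' j) = bilin_form S M x y - bilin_form S M x y'"
  by (simp add: bilin_form_def right_diff_distrib sum_subtractf)

lemma bilin_form_delta:
  assumes "finite S" "a \<in> S" "b \<in> S"
  shows "bilin_form S M (\<lambda>i. of_bool (i = a)) (\<lambda>j. of_bool (j = b)) = M a b"
proof -
  have "(\<Sum>j\<in>S. of_bool (i = a) * M i j * of_bool (j = b)) = of_bool (i = a) * M i b" for i
    using assms by (simp add: Int_insert_left)
  then show ?thesis
    using assms by (simp add: bilin_form_def Int_insert_left)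
qed

lemma bilin_form_minus_diag:
  assumes "finite S"
  shows "bilin_form S (\<lambda>i j. M i j - (if i = j then d else 0)) x x
           = bilin_form S M x x - d * (\<Sum>i\<in>S. (x i)\<^sup>2)"
proof -
  have "x i * (M i j - (if i = j then d else 0)) * x j
        = x i * M i j * x j - (if i = j then d * (x i)\<^sup>2 else 0)" for i j
    by (simp add: algebra_simps power2_eq_square)
  then show ?thesis
    using assms by (simp add: bilin_form_def sum_subtractf sum_distrib_left)
qed

lemma bilin_form_sym:
  assumes "\<forall>i\<in>S. \<forall>j\<in>S. M i j = M j i"
  shows "bilin_form S M x y = bilin_form S M y x"
  unfolding bilin_form_def using assms
  by (subst sum.swap) (auto simp: mult_ac intro!: sum.cong)

lemma psd_on_offdiag_le:
  assumes "psd_on S M" "finite S" "a \<in> S" "b \<in> S"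
  shows "2 * M a b \<le> M a a + M b b"
proof -
  let ?e = "\<lambda>c i. of_bool (i = c) :: real"
  have "0 \<le> bilin_form S M (\<lambda>i. ?e a i - ?e b i) (\<lambda>i. ?e a i - ?e b i)"
    using assms(1) by (simp add: psd_on_iff_bilin_form)
  also have "\<dots> = M a a + M b b - M a b - M b a"
    using assms(2-) by (simp add: bilin_form_diff_left bilin_form_diff_right bilin_form_delta)
  also have "M b a = M a b"
    using assms(1,3,4) by (simp add: psd_on_def)
  finally show ?thesis by simp
qed

lemma bilin_form_sum_left:
  "bilin_form S M (\<lambda>i. \<Sum>a\<in>B. x a i) y = (\<Sum>a\<in>B. bilin_form S M (x a) y)"
  unfolding bilin_form_def by (simp add: sum_distrib_right sum.swap[of _ B])

lemma bilin_form_sum_right: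
  "bilin_form S M x (\<lambda>j. \<Sum>b\<in>B. y b j) = (\<Sum>b\<in>B. bilin_form S M x (y b))"
  unfolding bilin_form_def by (simp add: sum_distrib_left sum.swap[of _ B])

lemma bilin_form_scale_left: "bilin_form S M (\<lambda>i. c * x i) y = c * bilin_form S M x y"
  unfolding bilin_form_def by (simp add: sum_distrib_left mult.assoc)

lemma bilin_form_scale_right: "bilin_form S M x (\<lambda>j. c * y j) = c * bilin_form S M x y"
  unfolding bilin_form_def by (simp add: sum_distrib_left mult_ac)

lemma psd_on_gram:
  assumes "\<forall>i\<in>S. \<forall>j\<in>S. M i j = M j i" and "\<forall>x. 0 \<le> bilin_form S M x x"
  shows "psd_on B (\<lambda>a b. bilin_form S M (z a) (z b))"
  unfolding psd_on_iff_bilin_form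
proof (intro conjI ballI allI)
  fix a b show "bilin_form S M (z a) (z b) = bilin_form S M (z b) (z a)"
    using assms(1) by (rule bilin_form_sym)
next
  fix x
  have "bilin_form B (\<lambda>a b. bilin_form S M (z a) (z b)) x x
      = bilin_form S M (\<lambda>i. \<Sum>a\<in>B. x a * z a i) (\<lambda>j. \<Sum>b\<in>B. x b * z b j)"
    by (simp add: bilin_form_def[of B] bilin_form_sum_left bilin_form_sum_right
        bilin_form_scale_left bilin_form_scale_right sum_distrib_left mult_ac)
  then show "0 \<le> bilin_form B (\<lambda>a b. bilin_form S M (z a) (z b)) x x"
    using assms(2) by simp
qed

text \<open>For s \<ge> 0 this needs only that the sum of all entries of G is nonnegative; for s < 0
  only that this sum is at most N tr G, which follows from the 2 \<times> 2 principal minors.\<close>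
lemma Pcoef_one_trace_le:
  fixes G :: "'a \<Rightarrow> 'a \<Rightarrow> real"
  assumes psd: "psd_on B G" and "finite B" and "card B = N"
  shows "Pcoef N 1 s * (\<Sum>a\<in>B. G a a)
           \<le> (\<Sum>a\<in>B. \<Sum>b\<in>B. (if a = b then 1 else s) * G a b)"
proof -
  define tr where "tr = (\<Sum>a\<in>B. G a a)"
  define tot where "tot = (\<Sum>a\<in>B. \<Sum>b\<in>B. G a b)"
  have "(if a = b then 1 else s) * G a b
        = s * G a b + (if a = b then (1 - s) * G a a else 0)" for a b
    by (simp add: algebra_simps)
  then have split:
      "(\<Sum>a\<in>B. \<Sum>b\<in>B. (if a = b then 1 else s) * G a b) = s * tot + (1 - s) * tr"
    using \<open>finite B\<close> by (simp add: sum.distrib sum_distrib_left tot_def tr_def)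
  have tot_nonneg: "0 \<le> tot"
    using psd
    by (auto simp: psd_on_iff_bilin_form bilin_form_def tot_def dest: spec[of _ "\<lambda>_. 1"])
  have "(\<Sum>a\<in>B. \<Sum>b\<in>B. 2 * G a b) \<le> (\<Sum>a\<in>B. \<Sum>b\<in>B. G a a + G b b)"
    using psd \<open>finite B\<close> by (intro sum_mono psd_on_offdiag_le)
  then have tot_le: "tot \<le> real N * tr"
    using \<open>card B = N\<close>
    by (simp add: sum.distrib tot_def tr_def sum_distrib_left[symmetric] sum.swap[of "\<lambda>a b. G b b"])
  show ?thesis
    unfolding split tr_def[symmetric]
  proof (cases "0 \<le> s")
    case True
    then show "Pcoef N 1 s * tr \<le> s * tot + (1 - s) * tr"
      using tot_nonneg by (simp add: Pcoef_def)
  next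
    case False
    then have "s * (real N * tr) \<le> s * tot"
      using tot_le by (intro mult_left_mono_neg) auto
    then show "Pcoef N 1 s * tr \<le> s * tot + (1 - s) * tr"
      using False by (simp add: Pcoef_def algebra_simps)
  qed
qed

definition hamming :: "'a set \<Rightarrow> ('a \<Rightarrow> 'b) \<Rightarrow> ('a \<Rightarrow> 'b) \<Rightarrow> nat" where
  "hamming T g h = card {t \<in> T. g t \<noteq> h t}"

definition hamming_gram :: "'a set \<Rightarrow> real \<Rightarrow> ('a \<Rightarrow> 'b) \<Rightarrow> ('a \<Rightarrow> 'b) \<Rightarrow> real" where
  "hamming_gram T s g h = s ^ hamming T g h"

lemma hamming_sym: "hamming T g h = hamming T h g"
  unfolding hamming_def by metis

lemma hamming_fun_upd:
  assumes "t \<notin> T" "finite T"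
  shows "hamming (insert t T) (g(t := a)) (h(t := b)) = hamming T g h + (if a = b then 0 else 1)"
proof -
  have "{u \<in> insert t T. (g(t := a)) u \<noteq> (h(t := b)) u}
        = (if a = b then {} else {t}) \<union> {u \<in> T. g u \<noteq> h u}"
    using assms by auto
  then show ?thesis
    using assms by (simp add: hamming_def)
qed

lemma hamming_gram_sym: "hamming_gram T s g h = hamming_gram T s h g"
  by (simp add: hamming_gram_def hamming_sym)

lemma hamming_gram_fun_upd:
  assumes "t \<notin> T" "finite T"
  shows "hamming_gram (insert t T) s (g(t := a)) (h(t := b))
           = (if a = b then 1 else s) * hamming_gram T s g h"
  using assms by (simp add: hamming_gram_def hamming_fun_upd power_add)

lemma sum_PiE_insert:
  assumes "t \<notin> T"
  shows "(\<Sum>g\<in>PiE (insert t T) A. F g) = (\<Sum>a\<in>A t. \<Sum>g\<in>PiE T A. F (g(t := a)))"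
proof -
  have "(\<Sum>g\<in>PiE (insert t T) A. F g) = (\<Sum>(a, g)\<in>A t \<times> PiE T A. F (g(t := a)))"
    unfolding PiE_insert_eq
    by (subst sum.reindex) (use inj_combinator[OF assms, of A] in \<open>auto simp: case_prod_beta\<close>)
  also have "\<dots> = (\<Sum>a\<in>A t. \<Sum>g\<in>PiE T A. F (g(t := a)))"
    by (rule sum.cartesian_product[symmetric])
  finally show ?thesis .
qed

lemma bilin_form_hamming_gram_insert:
  assumes "t \<notin> T" "finite T"
  shows "bilin_form (PiE (insert t T) (\<lambda>_. A)) (hamming_gram (insert t T) s) y y
    = (\<Sum>a\<in>A. \<Sum>b\<in>A. (if a = b then 1 else s) *
         bilin_form (PiE T (\<lambda>_. A)) (hamming_gram T s) (\<lambda>g. y (g(t := a))) (\<lambda>h. y (h(t := b))))"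
proof -
  let ?P = "PiE T (\<lambda>_. A)" and ?w = "\<lambda>a b. if a = b then 1 else s"
  have "bilin_form (PiE (insert t T) (\<lambda>_. A)) (hamming_gram (insert t T) s) y y
      = (\<Sum>a\<in>A. \<Sum>g\<in>?P. \<Sum>b\<in>A. \<Sum>h\<in>?P.
           y (g(t := a)) * (?w a b * hamming_gram T s g h) * y (h(t := b)))"
    using assms by (simp add: bilin_form_def sum_PiE_insert hamming_gram_fun_upd)
  also have "\<dots> = (\<Sum>a\<in>A. \<Sum>b\<in>A. \<Sum>g\<in>?P. \<Sum>h\<in>?P.
           ?w a b * (y (g(t := a)) * hamming_gram T s g h * y (h(t := b))))"
    by (intro sum.cong refl, subst sum.swap) (simp add: mult_ac)
  also have "\<dots> = (\<Sum>a\<in>A. \<Sum>b\<in>A. ?w a b *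
         bilin_form ?P (hamming_gram T s) (\<lambda>g. y (g(t := a))) (\<lambda>h. y (h(t := b))))"
    by (simp only: bilin_form_def sum_distrib_left)
  finally show ?thesis .
qed

lemma bilin_form_hamming_gram_ge:
  assumes "finite T" "finite A" "card A = N" "0 \<le> Pcoef N 1 s"
  shows "Pcoef N 1 s ^ card T * (\<Sum>g\<in>PiE T (\<lambda>_. A). (y g)\<^sup>2)
           \<le> bilin_form (PiE T (\<lambda>_. A)) (hamming_gram T s) y y"
  using assms(1)
proof (induction T arbitrary: y rule: finite_induct)
  case empty
  then show ?case
    by (simp add: bilin_form_def hamming_gram_def hamming_def power2_eq_square)
next
  case (insert t T)
  let ?c = "Pcoef N 1 s" and ?Q = "bilin_form (PiE T (\<lambda>_. A)) (hamming_gram T s)"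
  define z where "z = (\<lambda>a g. y (g(t := a)))"
  have "0 \<le> ?Q x x" for x
  proof -
    have "0 \<le> ?c ^ card T * (\<Sum>g\<in>PiE T (\<lambda>_. A). (x g)\<^sup>2)"
      using assms(4) by (intro mult_nonneg_nonneg sum_nonneg) auto
    also have "\<dots> \<le> ?Q x x"
      by (rule insert.IH)
    finally show ?thesis .
  qed
  then have "psd_on A (\<lambda>a b. ?Q (z a) (z b))"
    by (intro psd_on_gram) (auto intro: hamming_gram_sym)
  then have trace: "?c * (\<Sum>a\<in>A. ?Q (z a) (z a))
      \<le> (\<Sum>a\<in>A. \<Sum>b\<in>A. (if a = b then 1 else s) * ?Q (z a) (z b))"
    using assms(2,3) by (rule Pcoef_one_trace_le)
  have "?c ^ card (insert t T) * (\<Sum>g\<in>PiE (insert t T) (\<lambda>_. A). (y g)\<^sup>2)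
      = ?c * (\<Sum>a\<in>A. ?c ^ card T * (\<Sum>g\<in>PiE T (\<lambda>_. A). (z a g)\<^sup>2))"
    using insert.hyps by (simp add: sum_PiE_insert z_def sum_distrib_left mult.assoc)
  also have "\<dots> \<le> ?c * (\<Sum>a\<in>A. ?Q (z a) (z a))"
    using assms(4) insert.IH by (intro mult_left_mono sum_mono) auto
  also have "\<dots> \<le> bilin_form (PiE (insert t T) (\<lambda>_. A)) (hamming_gram (insert t T) s) y y"
    using trace insert.hyps by (simp add: bilin_form_hamming_gram_insert z_def)
  finally show ?case .
qed

lemma psd_on_hamming_gram_minus_diag:
  assumes "finite T" "finite A" "card A = N" "0 \<le> Pcoef N 1 s"
  shows "psd_on (PiE T (\<lambda>_. A))
           (\<lambda>g h. hamming_gram T s g h - (if g = h then Pcoef N 1 s ^ card T else 0))"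
  unfolding psd_on_iff_bilin_form
proof (intro conjI ballI allI)
  fix g h show "hamming_gram T s g h - (if g = h then Pcoef N 1 s ^ card T else 0)
              = hamming_gram T s h g - (if h = g then Pcoef N 1 s ^ card T else 0)"
    by (auto simp: hamming_gram_sym)
next
  fix y
  show "0 \<le> bilin_form (PiE T (\<lambda>_. A))
              (\<lambda>g h. hamming_gram T s g h - (if g = h then Pcoef N 1 s ^ card T else 0)) y y"
    using bilin_form_hamming_gram_ge[OF assms, of y] assms(1,2)
    by (simp add: bilin_form_minus_diag finite_PiE)
qed

lemma Pcoef_one_nonneg:
  assumes "N \<ge> 2" and "- 1 / (real N - 1) < s" and "s < 1"
  shows "0 \<le> Pcoef N 1 s"
proof -
  have "- 1 < (real N - 1) * s"
    using assms(1,2) by (simp add: field_simps)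
  then show ?thesis
    using assms(3) by (simp add: Pcoef_def)
qed

lemma Pcoef_eq_power: "Pcoef N k s = Pcoef N 1 s ^ k"
  by (simp add: Pcoef_def)

theorem theorem3:
  fixes N k :: nat and s :: real
  assumes "N \<ge> 2" and "k \<ge> 1"
    and "- 1 / (real N - 1) < s" and "s < 1"
  shows "psd_on (idx N k) (\<lambda>\<sigma> \<tau>. Gamma N k s \<sigma> \<tau> - Pmat N k s \<sigma> \<tau>)"
proof -
  have nonneg: "0 \<le> Pcoef N 1 s"
    using assms(1,3,4) by (rule Pcoef_one_nonneg)
  have diag: "Pcoef N 1 s ^ card {1..k} = Pcoef N k s"
    by (simp add: Pcoef_eq_power[of N k])
  have "psd_on (PiE {1..k} (\<lambda>_. {1..N}))
      (\<lambda>\<sigma> \<tau>. hamming_gram {1..k} s \<sigma> \<tau> - (if \<sigma> = \<tau> then Pcoef N k s else 0))"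
    by (rule psd_on_hamming_gram_minus_diag[OF _ _ _ nonneg, of "{1..k}" "{1..N}", unfolded diag])
      simp_all
  then show ?thesis
    by (simp add: idx_def Gamma_def Pmat_def hamming_gram_def hamming_def)
qed

end
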